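(* Suppose there is a finite set $C$ and a function $c:\mathcal Y\to C$ such that, for every $(a,b)\in\mathbf K$ and $y\in\mathcal Y_b$, $g(a,b,y)=h(a,b,c(y))$ for some function $h:\mathbf K\times C\to\{0,\dots,N-1\}$. For $b\in S^B$ and $\kappa\in C$, let $F_{b,\kappa}=\sum_{y\in\mathcal Y_b,\,c(y)=\kappa}P^B_y$ be the coarse-grained POVM elements. Let $\hat B$ be a register with orthonormal basis $\{|\kappa\rangle\}_{\kappa\in C}$. Define $$\hat K^B_b=\sum_{\kappa\in C}\sqrt{F_{b,\kappa}}\otimes|b\rangle_{\tilde B}\otimes|\kappa\rangle_{\hat B},\qquad \hat V=\sum_{(a,b)\in\mathbf K,\ \kappa\in C}|h(a,b,\kappa)\rangle_R\otimes|a\rangle\langle a|_{\tilde A}\otimes|b\rangle\langle b|_{\tilde B}\otimes|\kappa\rangle\langle\kappa|_{\hat B},$$ and $$\hat{\mathcal G}(\sigma)=\hat V\Pi\Big(\sum_{a,b}(K^A_a\otimes\hat K^B_b)\sigma(K^A_a\otimes\hat K^B_b)^\dagger\Big)\Pi\hat V^\dagger.$$ Then for every density operator $\rho_{AB}$ on $H_A\otimes H_B$, $$D\big(\mathcal G(\rho_{AB})\,\|\,\mathcal Z[\mathcal G(\rho_{AB})]\big)=D\big(\hat{\mathcal G}(\rho_{AB})\,\|\,\mathcal Z[\hat{\mathcal G}(\rho_{AB})]\big).$$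
   Context: Setting (reverse-reconciliation postprocessing). Registers and measurements. $H_A,H_B$ are finite-dimensional Hilbert spaces. Alice has a POVM $\{P^A_x\}_{x\in\mathcal X}$ on $H_A$, and Bob has a POVM $\{P^B_y\}_{y\in\mathcal Y}$ on $H_B$. Alice's announcement set $S^A$ gives a partition $\mathcal X=\bigcup_{a\in S^A}\mathcal X_a$ with $|\mathcal X_a|=\omega_A$ for all $a$. Bob's announcement set $S^B$ gives a partition $\mathcal Y=\bigcup_{b\in S^B}\mathcal Y_b$ with $|\mathcal Y_b|=\omega_B$ for all $b$. Fix bijections $f_a:\Omega^A=\{1,\dots,\omega_A\}\to\mathcal X_a$ and $f_b:\Omega^B=\{1,\dots,\omega_B\}\to\mathcal Y_b$. The registers $\tilde A,\tilde B,\bar A,\bar B$ have orthonormal bases $\{|a\rangle\}_{a\in S^A}$, $\{|b\rangle\}_{b\in S^B}$, $\{|\alpha\rangle\}_{\alpha\in\Omega^A}$ and $\{|\beta\rangle\}_{\beta\in\Omega^B}$ respectively. Announcement map. Define $$K^A_a=\sum_{\alpha\in\Omega^A}\sqrt{P^A_{f_a(\alpha)}}\otimes|a\rangle_{\tilde A}\otimes|\alpha\rangle_{\bar A},\qquad K^B_b=\sum_{\beta\in\Omega^B}\sqrt{P^B_{f_b(\beta)}}\otimes|b\rangle_{\tilde B}\otimes|\beta\rangle_{\bar B},$$ and $\mathcal A(\sigma)=\sum_{a\in S^A,b\in S^B}(K^A_a\otimes K^B_b)\sigma(K^A_a\otimes K^B_b)^\dagger$. Sifting. Fix a subset $\mathbf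 K\subseteq S^A\times S^B$ of kept announcements and let $\Pi=\sum_{(a,b)\in\mathbf K}|a\rangle\langle a|_{\tilde A}\otimes|b\rangle\langle b|_{\tilde B}$. Key map. Fix a key map $g:\mathbf K\times\mathcal Y\to\{0,\dots,N-1\}$. The register $R$ has orthonormal basis $\{|j\rangle\}_{j=0}^{N-1}$. Define $$V=\sum_{(a,b)\in\mathbf K,\ \beta\in\Omega^B}|g(a,b,f_b(\beta))\rangle_R\otimes|a\rangle\langle a|_{\tilde A}\otimes|b\rangle\langle b|_{\tilde B}\otimes|\beta\rangle\langle\beta|_{\bar B}.$$ Maps. $\mathcal G(\sigma)=V\Pi\mathcal A(\sigma)\Pi V^\dagger$, and $\mathcal Z(\sigma)=\sum_{j=0}^{N-1}(|j\rangle\langle j|_R\otimes\mathbb 1)\sigma(|j\rangle\langle j|_R\otimes\mathbb 1)$. Relative entropy. $D(\rho\|\sigma)=\operatorname{Tr}(\rho\log_2\rho)-\operatorname{Tr}(\rho\log_2\sigma)$, used also for subnormalized positive operators. *)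

theory Defs
  imports "HOL-Analysis.Analysis"
begin

text \<open>Finite-dimensional Hilbert spaces are modelled as complex^'n for a finite type 'n
(the type is the index set of an orthonormal basis). A linear map from complex^'n to
complex^'m is a matrix of type complex^'n^'m. Tensor products of registers correspond
to product index types; the order of the factors is fixed below.\<close>

definition adj :: "complex^'n^'m \<Rightarrow> complex^'m^'n" where
  "adj A = (\<chi> i j. cnj (A $ j $ i))"

definition cinner :: "complex^'n \<Rightarrow> complex^'n \<Rightarrow> complex" where
  "cinner u v = (\<Sum>i\<in>UNIV. cnj (u $ i) * v $ i)"

definition hermitian :: "complex^'n^'n \<Rightarrow> bool" where
  "hermitian A \<longleftrightarrow> adj A = A"

definition psd :: "complex^'n^'n \<Rightarrow> bool" where
  "psd A \<longleftrightarrow> hermitian A \<and> (\<forall>v. 0 \<le> Re (cinner v (A *v v)))"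

definition unitary :: "complex^'n^'n \<Rightarrow> bool" where
  "unitary U \<longleftrightarrow> adj U ** U = mat 1"

definition diag_mat :: "('n \<Rightarrow> real) \<Rightarrow> complex^'n^'n" where
  "diag_mat d = (\<chi> i j. if i = j then complex_of_real (d i) else 0)"

text \<open>Functional calculus for Hermitian matrices: f(A) = U diag(f(\<lambda>)) U^dagger for a
unitary diagonalisation A = U diag(\<lambda>) U^dagger (independent of the choice).\<close>
definition mfun :: "(real \<Rightarrow> real) \<Rightarrow> complex^'n^'n \<Rightarrow> complex^'n^'n" where
  "mfun f A = (SOME B. \<exists>U d. unitary U \<and> A = U ** diag_mat d ** adj U
                          \<and> B = U ** diag_mat (f \<circ> d) ** adj U)"

definition msqrt :: "complex^'n^'n \<Rightarrow> complex^'n^'n" where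
  "msqrt A = mfun sqrt A"

text \<open>Binary logarithm on the support (log 2 0 = 0 in Isabelle, so the kernel is mapped to 0).\<close>
definition mlog2 :: "complex^'n^'n \<Rightarrow> complex^'n^'n" where
  "mlog2 A = mfun (\<lambda>x. log 2 x) A"

definition rel_entropy :: "complex^'n^'n \<Rightarrow> complex^'n^'n \<Rightarrow> ereal" where
  "rel_entropy \<rho> \<sigma> =
     (if (\<forall>v. \<sigma> *v v = 0 \<longrightarrow> \<rho> *v v = 0)
      then ereal (Re (trace (\<rho> ** mlog2 \<rho>)) - Re (trace (\<rho> ** mlog2 \<sigma>)))
      else PInfty)"

definition density_op :: "complex^'n^'n \<Rightarrow> bool" where
  "density_op \<rho> \<longleftrightarrow> psd \<rho> \<and> trace \<rho> = 1"

definition povm :: "('x::finite \<Rightarrow> complex^'n^'n) \<Rightarrow> bool" where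
  "povm P \<longleftrightarrow> (\<forall>x. psd (P x)) \<and> (\<Sum>x\<in>UNIV. P x) = mat 1"

definition kron :: "complex^'n1^'m1 \<Rightarrow> complex^'n2^'m2 \<Rightarrow> complex^('n1 \<times> 'n2)^('m1 \<times> 'm2)" where
  "kron A B = (\<chi> p q. A $ fst p $ fst q * B $ snd p $ snd q)"

text \<open>A \<otimes> |x>  (as a map H \<rightarrow> H' \<otimes> X) and |x> \<otimes> A (as a map H \<rightarrow> X \<otimes> H').\<close>
definition ket_right :: "complex^'n^'m \<Rightarrow> 'x::finite \<Rightarrow> complex^'n^('m \<times> 'x)" where
  "ket_right A x = (\<chi> p j. if snd p = x then A $ fst p $ j else 0)"

definition ket_left :: "'x::finite \<Rightarrow> complex^'n^'m \<Rightarrow> complex^'n^('x \<times> 'm)" where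
  "ket_left x A = (\<chi> p j. if fst p = x then A $ snd p $ j else 0)"

definition proj :: "'x::finite \<Rightarrow> complex^'x^'x" where
  "proj x = (\<chi> i j. if i = x \<and> j = x then 1 else 0)"

definition ann_kraus :: "('s::finite \<Rightarrow> 'o::finite \<Rightarrow> complex^'h^'h) \<Rightarrow> 's \<Rightarrow> complex^'h^(('h \<times> 's) \<times> 'o)" where
  "ann_kraus Q s = (\<Sum>w\<in>UNIV. ket_right (ket_right (msqrt (Q s w)) s) w)"

definition ann_map ::
  "('sa::finite \<Rightarrow> 'oa::finite \<Rightarrow> complex^'ha^'ha) \<Rightarrow> ('sb::finite \<Rightarrow> 'ob::finite \<Rightarrow> complex^'hb^'hb)
   \<Rightarrow> complex^('ha \<times> 'hb)^('ha \<times> 'hb)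
   \<Rightarrow> complex^((('ha \<times> 'sa) \<times> 'oa) \<times> (('hb \<times> 'sb) \<times> 'ob))^((('ha \<times> 'sa) \<times> 'oa) \<times> (('hb \<times> 'sb) \<times> 'ob))" where
  "ann_map QA QB \<sigma> = (\<Sum>a\<in>UNIV. \<Sum>b\<in>UNIV.
      kron (ann_kraus QA a) (ann_kraus QB b) ** \<sigma> ** adj (kron (ann_kraus QA a) (ann_kraus QB b)))"

definition sift_proj :: "('sa::finite \<times> 'sb::finite) set
   \<Rightarrow> complex^((('ha::finite \<times> 'sa) \<times> 'oa::finite) \<times> (('hb::finite \<times> 'sb) \<times> 'ob::finite))^((('ha \<times> 'sa) \<times> 'oa) \<times> (('hb \<times> 'sb) \<times> 'ob))" where
  "sift_proj Ks = (\<Sum>(a,b)\<in>Ks. kron (kron (kron (mat 1) (proj a)) (mat 1))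
                                   (kron (kron (mat 1) (proj b)) (mat 1)))"

definition key_op :: "('sa::finite \<times> 'sb::finite) set \<Rightarrow> ('sa \<Rightarrow> 'sb \<Rightarrow> 'ob::finite \<Rightarrow> 'r::finite)
   \<Rightarrow> complex^((('ha::finite \<times> 'sa) \<times> 'oa::finite) \<times> (('hb::finite \<times> 'sb) \<times> 'ob))^('r \<times> ((('ha \<times> 'sa) \<times> 'oa) \<times> (('hb \<times> 'sb) \<times> 'ob)))" where
  "key_op Ks k = (\<Sum>(a,b)\<in>Ks. \<Sum>w\<in>UNIV. ket_left (k a b w)
        (kron (kron (kron (mat 1) (proj a)) (mat 1)) (kron (kron (mat 1) (proj b)) (proj w))))"

definition G_map ::
  "('sa::finite \<Rightarrow> 'oa::finite \<Rightarrow> complex^'ha^'ha) \<Rightarrow> ('sb::finite \<Rightarrow> 'ob::finite \<Rightarrow> complex^'hb^'hb)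
   \<Rightarrow> ('sa \<times> 'sb) set \<Rightarrow> ('sa \<Rightarrow> 'sb \<Rightarrow> 'ob \<Rightarrow> 'r::finite)
   \<Rightarrow> complex^('ha \<times> 'hb)^('ha \<times> 'hb)
   \<Rightarrow> complex^('r \<times> ((('ha \<times> 'sa) \<times> 'oa) \<times> (('hb \<times> 'sb) \<times> 'ob)))^('r \<times> ((('ha \<times> 'sa) \<times> 'oa) \<times> (('hb \<times> 'sb) \<times> 'ob)))" where
  "G_map QA QB Ks k \<sigma> =
     key_op Ks k ** sift_proj Ks ** ann_map QA QB \<sigma> ** sift_proj Ks ** adj (key_op Ks k)"

definition Z_map :: "complex^('r::finite \<times> 'm::finite)^('r \<times> 'm) \<Rightarrow> complex^('r \<times> 'm)^('r \<times> 'm)" where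
  "Z_map \<sigma> = (\<Sum>j\<in>UNIV. kron (proj j) (mat 1) ** \<sigma> ** kron (proj j) (mat 1))"

end

theory Submission
  imports Defs
begin

text \<open>On Bob's side, stack the fine square roots \<open>sqrt(P\<^sub>y) \<otimes> |\<beta>\<rangle>\<close> over all \<open>\<beta>\<close> with
  \<open>c(f\<^sub>b \<beta>) = \<kappa>\<close> into one operator \<open>M\<^sub>b\<^sub>\<kappa>\<close>. Then \<open>M\<^sub>b\<^sub>\<kappa>\<^sup>\<dagger> M\<^sub>b\<^sub>\<kappa> = F\<^sub>b\<^sub>\<kappa>\<close>, so by polar
  decomposition \<open>M\<^sub>b\<^sub>\<kappa> = W\<^sub>b\<^sub>\<kappa> sqrt(F\<^sub>b\<^sub>\<kappa>)\<close> with \<open>W\<^sub>b\<^sub>\<kappa>\<close> isometric on the support of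
  \<open>F\<^sub>b\<^sub>\<kappa>\<close>; the \<open>W\<^sub>b\<^sub>\<kappa>\<close> for distinct \<open>\<kappa>\<close> have orthogonal ranges. Because the key depends on
  \<open>\<beta>\<close> only through \<open>\<kappa>\<close>, gluing these blocks together with identities on the key register and on
  Alice's side yields a single partial isometry \<open>W\<close> relating the fine map \<open>G\<close> to the
  coarse-grained map \<open>G'\<close>: \<open>G(\<sigma>) = W G'(\<sigma>) W\<^sup>\<dagger>\<close> and \<open>W\<^sup>\<dagger> W G'(\<sigma>) = G'(\<sigma>)\<close>.
  The operator \<open>W\<close> acts trivially on the key register, so it intertwines the pinching \<open>Z\<close>; and
  relative entropy is invariant under conjugation by an operator that is isometric
  on the supports of both arguments, since such a conjugation commutes with the matrix logarithm.\<close>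

lemma sum_UNIV_prod:
  "sum f (UNIV :: ('a::finite \<times> 'b::finite) set) = (\<Sum>a\<in>UNIV. \<Sum>b\<in>UNIV. f (a, b))"
  by (simp add: sum.cartesian_product UNIV_Times_UNIV[symmetric] del: UNIV_Times_UNIV)

lemma adj_entry [simp]: "adj A $ i $ j = cnj (A $ j $ i)"
  by (simp add: adj_def)

lemma adj_adj [simp]: "adj (adj A) = A"
  by (simp add: vec_eq_iff)

lemma adj_zero [simp]: "adj 0 = 0"
  by (simp add: vec_eq_iff)

lemma adj_mat_1 [simp]: "adj (mat 1) = mat 1"
  by (simp add: vec_eq_iff mat_def)

lemma adj_mult: "adj (A ** B) = adj B ** adj A"
  by (simp add: vec_eq_iff matrix_matrix_mult_def mult.commute)

lemma adj_add: "adj (A + B) = adj A + adj B"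
  by (simp add: vec_eq_iff)

lemma adj_sum: "adj (sum f S) = (\<Sum>x\<in>S. adj (f x))"
  by (induct S rule: infinite_finite_induct) (auto simp: adj_add)

lemma matrix_add_rdistrib: "(B + C) ** A = B ** A + C ** A"
  by (vector matrix_matrix_mult_def sum.distrib[symmetric] field_simps)

lemma matrix_mult_sum_right: "A ** sum f S = (\<Sum>x\<in>S. A ** f x)"
  by (induct S rule: infinite_finite_induct) (auto simp: matrix_add_ldistrib)

lemma matrix_mult_sum_left: "sum f S ** A = (\<Sum>x\<in>S. f x ** A)"
  by (induct S rule: infinite_finite_induct) (auto simp: matrix_add_rdistrib)

lemma hermitian_conj: "hermitian Y \<Longrightarrow> hermitian (T ** Y ** adj T)"
  by (simp add: hermitian_def adj_mult matrix_mul_assoc)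

lemma hermitian_sum: "(\<And>x. x \<in> S \<Longrightarrow> hermitian (f x)) \<Longrightarrow> hermitian (sum f S)"
  by (simp add: hermitian_def adj_sum)

lemma unitary_right: "unitary U \<Longrightarrow> U ** adj U = mat 1"
  by (simp add: unitary_def matrix_left_right_inverse)

lemma cinner_add_right: "cinner u (v + w) = cinner u v + cinner u w"
  by (simp add: cinner_def sum.distrib algebra_simps)

lemma cinner_add_left: "cinner (v + w) u = cinner v u + cinner w u"
  by (simp add: cinner_def sum.distrib algebra_simps)

lemma cinner_diff_right: "cinner u (v - w) = cinner u v - cinner u w"
  by (simp add: cinner_def sum_subtractf algebra_simps)

lemma cinner_scale_right: "cinner u (c *s v) = c * cinner u v"
  by (simp add: cinner_def sum_distrib_left algebra_simps)

lemma cinner_scale_left: "cinner (c *s v) u = cnj c * cinner v u"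
  by (simp add: cinner_def sum_distrib_left algebra_simps)

lemma cinner_zero_right [simp]: "cinner u 0 = 0"
  by (simp add: cinner_def)

lemma cinner_commute: "cnj (cinner u v) = cinner v u"
  by (simp add: cinner_def mult.commute)

lemma cinner_sum_right: "cinner u (sum f S) = (\<Sum>x\<in>S. cinner u (f x))"
  by (induct S rule: infinite_finite_induct) (auto simp: cinner_add_right)

lemma cinner_adj: "cinner u (A *v v) = cinner (adj A *v u) v"
proof -
  have "cinner u (A *v v) = (\<Sum>i\<in>UNIV. \<Sum>j\<in>UNIV. cnj (u$i) * (A$i$j * v$j))"
    by (simp add: cinner_def matrix_vector_mult_def sum_distrib_left)
  also have "\<dots> = (\<Sum>j\<in>UNIV. \<Sum>i\<in>UNIV. cnj (u$i) * (A$i$j * v$j))"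
    by (rule sum.swap)
  also have "\<dots> = cinner (adj A *v u) v"
    by (simp add: cinner_def matrix_vector_mult_def sum_distrib_right mult.assoc mult.left_commute)
  finally show ?thesis .
qed

lemma cinner_self: "cinner v v = of_real ((norm v)\<^sup>2)"
proof -
  have "cinner v v = (\<Sum>i\<in>UNIV. of_real ((norm (v$i))\<^sup>2))"
    unfolding cinner_def by (intro sum.cong refl) (metis complex_norm_square mult.commute)
  also have "\<dots> = of_real ((norm v)\<^sup>2)"
    by (simp add: norm_vec_def L2_set_def sum_nonneg)
  finally show ?thesis .
qed

lemma cinner_self_eq_0_iff [simp]: "cinner v v = 0 \<longleftrightarrow> v = 0"
  by (simp add: cinner_self)

lemma hermitian_cinner: "hermitian A \<Longrightarrow> cinner u (A *v v) = cinner (A *v u) v"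
  by (simp add: cinner_adj hermitian_def)

lemma hermitian_cinner_real:
  assumes "hermitian A"
  shows "cinner v (A *v v) = of_real (Re (cinner v (A *v v)))"
proof -
  have "cnj (cinner v (A *v v)) = cinner v (A *v v)"
    using assms by (simp add: cinner_commute hermitian_cinner)
  then show ?thesis by (simp add: complex_eq_iff)
qed

lemma cinner_adj_mult_self: "cinner v ((adj M ** M) *v v) = cinner (M *v v) (M *v v)"
  using cinner_adj[of v "adj M" "M *v v"] by (simp add: matrix_vector_mul_assoc)

lemma psd_adj_mult_self: "psd (adj M ** M)"
  by (simp add: psd_def hermitian_def adj_mult cinner_adj_mult_self cinner_self)

lemma adj_mult_self_eq_0D: "adj N ** N = 0 \<Longrightarrow> N = 0"
  using cinner_adj_mult_self[of _ N] by (auto simp: matrix_eq)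

lemma kron_mult: "kron A B ** kron C D = kron (A ** C) (B ** D)"
  by (simp add: vec_eq_iff matrix_matrix_mult_def kron_def sum_product sum_UNIV_prod algebra_simps)

lemma adj_kron: "adj (kron A B) = kron (adj A) (adj B)"
  by (simp add: vec_eq_iff kron_def)

lemma diag_mat_mult: "diag_mat d1 ** diag_mat d2 = diag_mat (\<lambda>i. d1 i * d2 i)"
  by (simp add: vec_eq_iff matrix_matrix_mult_def diag_mat_def if_distrib[of "\<lambda>x. _ * x"]
      cong: if_cong)

lemma adj_diag_mat [simp]: "adj (diag_mat d) = diag_mat d"
  by (simp add: vec_eq_iff diag_mat_def)

lemma diag_mat_add: "diag_mat d1 + diag_mat d2 = diag_mat (\<lambda>i. d1 i + d2 i)"
  by (simp add: vec_eq_iff diag_mat_def)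

lemma diag_mat_1: "diag_mat (\<lambda>i. 1) = mat 1"
  by (simp add: vec_eq_iff diag_mat_def mat_def)

lemma diag_mat_0: "diag_mat (\<lambda>i. 0) = 0"
  by (simp add: vec_eq_iff diag_mat_def)

lemma diag_mat_mult_vec: "(diag_mat d *v w) $ i = complex_of_real (d i) * w $ i"
  by (simp add: matrix_vector_mult_def diag_mat_def if_distrib[of "\<lambda>x. x * _"] cong: if_cong)

subsection \<open>The spectral theorem for Hermitian matrices\<close>

definition orthonormal_set :: "(complex^'n) set \<Rightarrow> bool" where
  "orthonormal_set S \<longleftrightarrow> (\<forall>s\<in>S. \<forall>t\<in>S. cinner s t = (if s = t then 1 else 0))"

lemma orthonormal_set_independent:
  assumes fin: "finite S" and on: "orthonormal_set S"
  shows "vec.independent S"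
proof (rule vec.independent_if_scalars_zero[OF fin])
  fix f x assume sum0: "(\<Sum>y\<in>S. f y *s y) = 0" and x: "x \<in> S"
  have "0 = cinner x (\<Sum>y\<in>S. f y *s y)" using sum0 by simp
  also have "\<dots> = (\<Sum>y\<in>S. f y * cinner x y)" by (simp add: cinner_sum_right cinner_scale_right)
  also have "\<dots> = (\<Sum>y\<in>S. if y = x then f y else 0)"
    using on x unfolding orthonormal_set_def by (intro sum.cong refl) auto
  also have "\<dots> = f x" using x fin by simp
  finally show "f x = 0" by simp
qed

lemma orthonormal_set_orthogonal_exists:
  fixes S :: "(complex^'n) set"
  assumes fin: "finite S" and on: "orthonormal_set S" and card: "card S < CARD('n)"
  obtains u where "u \<noteq> 0" "\<forall>s\<in>S. cinner s u = 0"
proof -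
  have ind: "vec.independent S" by (rule orthonormal_set_independent[OF fin on])
  have "vec.span S \<noteq> UNIV"
  proof
    assume "vec.span S = UNIV"
    then have "vec.dim (UNIV :: (complex^'n) set) = card S"
      using vec.dim_span_eq_card_independent[OF ind] by simp
    then show False using card by (simp add: card_cart_basis)
  qed
  then obtain x where x: "x \<notin> vec.span S" by auto
  \<comment> \<open>Gram--Schmidt step\<close>
  define y where "y = x - (\<Sum>s\<in>S. cinner s x *s s)"
  have "cinner t y = 0" if t: "t \<in> S" for t
  proof -
    have "(\<Sum>s\<in>S. cinner s x * cinner t s) = (\<Sum>s\<in>S. if s = t then cinner s x else 0)"
      using on t unfolding orthonormal_set_def by (intro sum.cong refl) auto
    then show ?thesis
      using t fin by (simp add: y_def cinner_diff_right cinner_sum_right cinner_scale_right)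
  qed
  moreover have "y \<noteq> 0"
    using x vec.span_sum[of S "\<lambda>s. cinner s x *s s"] by (auto simp: y_def vec.span_scale vec.span_base)
  ultimately show ?thesis using that by blast
qed

lemma quadratic_nonpos_imp_linear_coeff_0:
  fixes a b :: real
  assumes "\<And>t. 2 * t * a + t\<^sup>2 * b \<le> 0" and "a \<ge> 0"
  shows "a = 0"
proof (rule ccontr)
  assume "a \<noteq> 0"
  with assms(2) have a: "a > 0" by simp
  define t where "t = a / (\<bar>b\<bar> + 1)"
  have t: "t > 0" "t * (\<bar>b\<bar> + 1) = a" using a by (simp_all add: t_def)
  then have "t\<^sup>2 * \<bar>b\<bar> \<le> t * a"
    by (simp add: power2_eq_square algebra_simps mult_left_mono)
  moreover have "t\<^sup>2 * b \<ge> - (t\<^sup>2 * \<bar>b\<bar>)"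
    using mult_left_mono[of "-\<bar>b\<bar>" b "t\<^sup>2"] by simp
  moreover have "t * a > 0" using t a by simp
  ultimately show False using assms(1)[of t] by linarith
qed

text \<open>The Rayleigh quotient has a critical point at \<open>v\<close> in the direction \<open>w = A v - l v\<close>, which
  forces \<open>w = 0\<close>.\<close>

lemma rayleigh_maximizer_eigenvector:
  fixes A :: "complex^'n^'n"
  assumes herm: "hermitian A" and V: "vec.subspace V" and AV: "\<And>x. x \<in> V \<Longrightarrow> A *v x \<in> V"
    and v: "v \<in> V" "cinner v v = 1"
    and max: "\<And>x. x \<in> V \<Longrightarrow> Re (cinner x (A *v x)) \<le> l * Re (cinner x x)"
    and l: "l = Re (cinner v (A *v v))"
  shows "A *v v = complex_of_real l *s v"
proof -
  define q where "q x = Re (cinner x (A *v x))" for x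
  define w where "w = A *v v - complex_of_real l *s v"
  have wV: "w \<in> V"
    unfolding w_def using V v AV by (intro vec.subspace_diff vec.subspace_scale) auto
  have Avv: "cinner v (A *v v) = complex_of_real l"
    using hermitian_cinner_real[OF herm, of v] by (simp add: l)
  have "2 * t * Re (cinner w w) + t\<^sup>2 * (q w - l * Re (cinner w w)) \<le> 0" for t :: real
  proof -
    define x where "x = v + complex_of_real t *s w"
    have "x \<in> V" unfolding x_def using V v wV by (intro vec.subspace_add vec.subspace_scale) auto
    then have "q x \<le> l * Re (cinner x x)" unfolding q_def by (rule max)
    moreover have "cinner x (A *v x) = cinner v (A *v v)
        + complex_of_real t * (cinner v (A *v w) + cinner w (A *v v))
        + complex_of_real (t\<^sup>2) * cinner w (A *v w)"
      by (simp add: x_def matrix_vector_right_distrib vec.scale cinner_add_left cinner_add_right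
          cinner_scale_left cinner_scale_right algebra_simps power2_eq_square)
    moreover have "cinner x x = cinner v v + complex_of_real t * (cinner v w + cinner w v)
        + complex_of_real (t\<^sup>2) * cinner w w"
      by (simp add: x_def cinner_add_left cinner_add_right
          cinner_scale_left cinner_scale_right algebra_simps power2_eq_square)
    moreover have "Re (cinner v (A *v w)) = Re (cinner w (A *v v))"
    proof -
      have "cinner v (A *v w) = cnj (cinner w (A *v v))"
        by (simp add: hermitian_cinner[OF herm] cinner_commute)
      then show ?thesis by simp
    qed
    moreover have "Re (cinner v w) = Re (cinner w v)"
      using arg_cong[OF cinner_commute[of w v], of Re] by simp
    moreover have "Re (cinner w (A *v v)) = Re (cinner w w) + l * Re (cinner w v)"
      by (simp add: w_def cinner_diff_right cinner_scale_right)
    ultimately show ?thesis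
      using Avv v(2) by (simp add: q_def algebra_simps)
  qed
  then have "Re (cinner w w) = 0"
    by (rule quadratic_nonpos_imp_linear_coeff_0) (simp add: cinner_self)
  then have "w = 0" by (simp add: cinner_self)
  then show ?thesis by (simp add: w_def)
qed

lemma rayleigh_quotient_max_exists:
  fixes A :: "complex^'n^'n"
  assumes V: "vec.subspace V" "closed V" and u: "u \<in> V" "u \<noteq> 0"
  obtains v where "v \<in> V" "cinner v v = 1"
    "\<And>x. x \<in> V \<Longrightarrow> Re (cinner x (A *v x)) \<le> Re (cinner v (A *v v)) * Re (cinner x x)"
proof -
  define q where "q x = Re (cinner x (A *v x))" for x
  define K where "K = V \<inter> {x. cinner x x = 1}"
  have normalize: "complex_of_real (1 / norm x) *s x \<in> K" if "x \<in> V" "x \<noteq> 0" for x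
  proof -
    have "cinner (complex_of_real (1 / norm x) *s x) (complex_of_real (1 / norm x) *s x)
        = complex_of_real (1 / norm x) * (complex_of_real (1 / norm x) * cinner x x)"
      by (simp add: cinner_scale_left cinner_scale_right)
    also have "\<dots> = 1" using that by (simp add: cinner_self power2_eq_square)
    finally show ?thesis using that V(1) by (simp add: K_def vec.subspace_scale)
  qed
  have "compact K"
    unfolding K_def Int_commute[of V]
  proof (rule compact_Int_closed[OF _ V(2)])
    have "cinner x x = 1 \<longleftrightarrow> norm x = 1" for x :: "complex^'n"
      unfolding cinner_self of_real_eq_1_iff abs_square_eq_1 by simp
    then have "{x::complex^'n. cinner x x = 1} = sphere 0 1" by (simp add: set_eq_iff)
    show "compact {x::complex^'n. cinner x x = 1}"
      unfolding \<open>_ = sphere 0 1\<close> by simp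
  qed
  moreover have "K \<noteq> {}" using normalize[OF u] by blast
  moreover have "continuous_on UNIV q"
    unfolding q_def matrix_vector_mult_def cinner_def by (intro continuous_intros)
  ultimately obtain v where v: "v \<in> K" and vmax: "\<And>y. y \<in> K \<Longrightarrow> q y \<le> q v"
    using continuous_attains_sup[of K q] continuous_on_subset[of UNIV q K] by blast
  have "q x \<le> q v * Re (cinner x x)" if x: "x \<in> V" for x
  proof (cases "x = 0")
    case False
    have "q (complex_of_real (1 / norm x) *s x) \<le> q v" by (rule vmax[OF normalize[OF x False]])
    moreover have "q (complex_of_real (1 / norm x) *s x) = q x / (norm x)\<^sup>2"
      by (simp add: q_def cinner_scale_left cinner_scale_right vec.scale power2_eq_square)
    ultimately show ?thesis
      using False by (simp add: cinner_self divide_le_eq mult.commute)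
  qed (simp add: q_def)
  then show ?thesis using that v by (auto simp: K_def q_def)
qed

lemma hermitian_orthogonal_eigenvector_exists:
  fixes A :: "complex^'n^'n"
  assumes herm: "hermitian A" and fin: "finite S" and on: "orthonormal_set S"
    and eig: "\<forall>s\<in>S. \<exists>\<mu>::real. A *v s = complex_of_real \<mu> *s s"
    and card: "card S < CARD('n)"
  obtains u \<mu> where "cinner u u = 1" "\<forall>s\<in>S. cinner s u = 0" "A *v u = complex_of_real \<mu> *s u"
proof -
  define V where "V = {x::complex^'n. \<forall>s\<in>S. cinner s x = 0}"
  have subspace: "vec.subspace V"
    by (auto simp: vec.subspace_def V_def cinner_add_right cinner_scale_right)
  have "V = (\<Inter>s\<in>S. {x. cinner s x = 0})" by (auto simp: V_def)
  moreover have "closed {x::complex^'n. cinner s x = 0}" for s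
    unfolding cinner_def by (intro closed_Collect_eq continuous_intros)
  ultimately have closed: "closed V" by auto
  have AV: "A *v x \<in> V" if x: "x \<in> V" for x
  proof -
    have "cinner s (A *v x) = 0" if s: "s \<in> S" for s
    proof -
      obtain \<mu> :: real where "A *v s = complex_of_real \<mu> *s s" using eig s by blast
      then have "cinner s (A *v x) = complex_of_real \<mu> * cinner s x"
        by (simp add: hermitian_cinner[OF herm] cinner_scale_left)
      then show ?thesis using x s by (simp add: V_def)
    qed
    then show ?thesis by (simp add: V_def)
  qed
  obtain u0 where "u0 \<noteq> 0" "u0 \<in> V"
    using orthonormal_set_orthogonal_exists[OF fin on card] by (auto simp: V_def)
  then obtain v where v: "v \<in> V" "cinner v v = 1"
    and max: "\<And>x. x \<in> V \<Longrightarrow> Re (cinner x (A *v x)) \<le> Re (cinner v (A *v v)) * Re (cinner x x)"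
    using rayleigh_quotient_max_exists[OF subspace closed] by metis
  have "A *v v = complex_of_real (Re (cinner v (A *v v))) *s v"
    by (rule rayleigh_maximizer_eigenvector[OF herm subspace AV v max refl])
  with v that show ?thesis by (auto simp: V_def)
qed

lemma hermitian_orthonormal_eigenvectors:
  fixes A :: "complex^'n^'n"
  assumes herm: "hermitian A" and k: "k \<le> CARD('n)"
  shows "\<exists>S. finite S \<and> card S = k \<and> orthonormal_set S \<and>
           (\<forall>s\<in>S. \<exists>\<mu>::real. A *v s = complex_of_real \<mu> *s s)"
  using k
proof (induction k)
  case 0
  show ?case by (rule exI[of _ "{}"]) (simp add: orthonormal_set_def)
next
  case (Suc k)
  then obtain S where S: "finite S" "card S = k" "orthonormal_set S"
    "\<forall>s\<in>S. \<exists>\<mu>::real. A *v s = complex_of_real \<mu> *s s"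
    by auto
  obtain u \<mu> where u: "cinner u u = 1" "\<forall>s\<in>S. cinner s u = 0" "A *v u = complex_of_real \<mu> *s u"
    using hermitian_orthogonal_eigenvector_exists[OF herm S(1,3,4)] S(2) Suc.prems by auto
  have uS: "u \<notin> S" using u by auto
  have "cinner u s = 0" if "s \<in> S" for s
    using u(2) that cinner_commute[of s u] by simp
  then have "orthonormal_set (insert u S)"
    using S(3) u(1,2) uS unfolding orthonormal_set_def by auto
  moreover have "card (insert u S) = Suc k" using S uS by simp
  ultimately show ?case using S u by (intro exI[of _ "insert u S"]) auto
qed

theorem hermitian_spectral_decomposition:
  fixes A :: "complex^'n^'n"
  assumes herm: "hermitian A"
  obtains U d where "unitary U" "A = U ** diag_mat d ** adj U"
proof -
  obtain S where S: "finite S" "card S = CARD('n)" "orthonormal_set S"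
      "\<forall>s\<in>S. \<exists>\<mu>::real. A *v s = complex_of_real \<mu> *s s"
    using hermitian_orthonormal_eigenvectors[OF herm, of "CARD('n)"] by auto
  obtain e where e: "bij_betw e (UNIV::'n set) S"
    using finite_same_card_bij[of "UNIV::'n set" S] S by auto
  have eS: "e j \<in> S" for j using e by (auto simp: bij_betw_def)
  have einj: "e i = e j \<longleftrightarrow> i = j" for i j using e by (auto simp: bij_betw_def inj_on_def)
  define d where "d j = (SOME \<mu>::real. A *v e j = complex_of_real \<mu> *s e j)" for j
  have d: "A *v e j = complex_of_real (d j) *s e j" for j
    unfolding d_def by (rule someI_ex) (use S(4) eS in blast)
  define U :: "complex^'n^'n" where "U = (\<chi> i j. e j $ i)"
  have "(adj U ** U) $ i $ j = cinner (e i) (e j)" for i j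
    by (simp add: matrix_matrix_mult_def U_def cinner_def)
  then have uni: "unitary U"
    using S(3) eS einj by (auto simp: unitary_def orthonormal_set_def vec_eq_iff mat_def)
  have "(A ** U) $ i $ j = (U ** diag_mat d) $ i $ j" for i j
  proof -
    have "(A ** U) $ i $ j = (A *v e j) $ i"
      by (simp add: matrix_matrix_mult_def matrix_vector_mult_def U_def)
    also have "\<dots> = e j $ i * complex_of_real (d j)"
      by (simp add: d mult.commute)
    also have "\<dots> = (U ** diag_mat d) $ i $ j"
      by (simp add: matrix_matrix_mult_def diag_mat_def U_def if_distrib[of "\<lambda>x. _ * x"] cong: if_cong)
    finally show ?thesis .
  qed
  then have "A ** U = U ** diag_mat d" by (simp add: vec_eq_iff)
  then have "A = U ** diag_mat d ** adj U"
    by (metis matrix_mul_assoc matrix_mul_rid unitary_right[OF uni])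
  with uni that show ?thesis by blast
qed

subsection \<open>Functional calculus\<close>

lemma hermitian_unitary_conj_diag: "hermitian (U ** diag_mat d ** adj U)"
  by (simp add: hermitian_def adj_mult matrix_mul_assoc)

lemma unitary_conj_diag_eigenvector:
  assumes U: "unitary U" and A: "A = U ** diag_mat d ** adj U"
    and ev: "A *v v = complex_of_real \<mu> *s v"
  shows "(U ** diag_mat (f \<circ> d) ** adj U) *v v = complex_of_real (f \<mu>) *s v"
proof -
  define w where "w = adj U *v v"
  have "adj U *v (A *v v) = diag_mat d *v w"
    using U by (simp add: A w_def matrix_vector_mul_assoc matrix_mul_assoc unitary_def)
  then have "diag_mat d *v w = complex_of_real \<mu> *s w"
    by (simp add: ev w_def vec.scale)
  then have "w $ i = 0 \<or> d i = \<mu>" for i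
    by (auto simp: vec_eq_iff diag_mat_mult_vec dest: spec[of _ i])
  then have "diag_mat (f \<circ> d) *v w = complex_of_real (f \<mu>) *s w"
    by (auto simp: vec_eq_iff diag_mat_mult_vec)
  then have "(U ** diag_mat (f \<circ> d) ** adj U) *v v = complex_of_real (f \<mu>) *s (U *v w)"
    by (simp add: w_def matrix_vector_mul_assoc[symmetric] vec.scale)
  also have "U *v w = v" by (simp add: w_def matrix_vector_mul_assoc unitary_right[OF U])
  finally show ?thesis .
qed

lemma unitary_conj_diag_column:
  assumes U: "unitary U" and A: "A = U ** diag_mat d ** adj U"
  shows "A *v (U *v axis j 1) = complex_of_real (d j) *s (U *v axis j 1)"
proof -
  have "A ** U = U ** diag_mat d"
    using U by (simp add: A matrix_mul_assoc[symmetric] unitary_def)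
  then have "A *v (U *v axis j 1) = U *v (diag_mat d *v axis j 1)"
    by (simp add: matrix_vector_mul_assoc)
  also have "diag_mat d *v axis j 1 = complex_of_real (d j) *s axis j (1::complex)"
    by (auto simp: vec_eq_iff diag_mat_mult_vec axis_def)
  finally show ?thesis by (simp add: vec.scale)
qed

lemma matrix_eq_on_eigenvectors:
  fixes A :: "complex^'n^'n"
  assumes herm: "hermitian A"
    and B: "\<And>v \<mu>. A *v v = complex_of_real \<mu> *s v \<Longrightarrow> B *v v = complex_of_real (f \<mu>) *s v"
    and B': "\<And>v \<mu>. A *v v = complex_of_real \<mu> *s v \<Longrightarrow> B' *v v = complex_of_real (f \<mu>) *s v"
  shows "B = B'"
proof -
  obtain U d where U: "unitary U" and A: "A = U ** diag_mat d ** adj U"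
    using hermitian_spectral_decomposition[OF herm] by blast
  have col: "B *v (U *v axis j 1) = B' *v (U *v axis j 1)" for j
    using B[OF unitary_conj_diag_column[OF U A]] B'[OF unitary_conj_diag_column[OF U A]] by simp
  have "B ** U = B' ** U"
  proof (subst matrix_eq, intro allI)
    fix x :: "complex^'n"
    have "(B ** U) *v x = B *v (U *v (\<Sum>j\<in>UNIV. x $ j *s axis j 1))"
      by (simp add: basis_expansion matrix_vector_mul_assoc)
    also have "\<dots> = (\<Sum>j\<in>UNIV. x $ j *s (B *v (U *v axis j 1)))"
      by (simp add: vec.sum vec.scale)
    also have "\<dots> = (\<Sum>j\<in>UNIV. x $ j *s (B' *v (U *v axis j 1)))"
      by (simp add: col)
    also have "\<dots> = B' *v (U *v (\<Sum>j\<in>UNIV. x $ j *s axis j 1))"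
      by (simp add: vec.sum vec.scale)
    also have "\<dots> = (B' ** U) *v x"
      by (simp add: basis_expansion matrix_vector_mul_assoc)
    finally show "(B ** U) *v x = (B' ** U) *v x" .
  qed
  then show ?thesis
    by (metis matrix_mul_assoc matrix_mul_rid unitary_right[OF U])
qed

lemma mfun_eigenvector:
  assumes herm: "hermitian A" and ev: "A *v v = complex_of_real \<mu> *s v"
  shows "mfun f A *v v = complex_of_real (f \<mu>) *s v"
proof -
  obtain U0 d0 where "unitary U0" "A = U0 ** diag_mat d0 ** adj U0"
    using hermitian_spectral_decomposition[OF herm] by blast
  then have ex: "\<exists>B U d. unitary U \<and> A = U ** diag_mat d ** adj U \<and> B = U ** diag_mat (f \<circ> d) ** adj U"
    by blast
  then obtain U d where U: "unitary U" "A = U ** diag_mat d ** adj U"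
      "mfun f A = U ** diag_mat (f \<circ> d) ** adj U"
    using someI_ex[OF ex] unfolding mfun_def by blast
  show ?thesis using unitary_conj_diag_eigenvector[OF U(1,2) ev] U(3) by simp
qed

lemma mfun_eqI:
  assumes "hermitian A"
    and "\<And>v \<mu>. A *v v = complex_of_real \<mu> *s v \<Longrightarrow> B *v v = complex_of_real (f \<mu>) *s v"
  shows "mfun f A = B"
  using matrix_eq_on_eigenvectors[of A "mfun f A" f B] mfun_eigenvector[OF assms(1)] assms by blast

lemma mfun_unitary_conj_diag:
  assumes "unitary U" and "A = U ** diag_mat d ** adj U"
  shows "mfun f A = U ** diag_mat (f \<circ> d) ** adj U"
proof (rule mfun_eqI)
  show "hermitian A" by (simp add: assms(2) hermitian_unitary_conj_diag)
qed (rule unitary_conj_diag_eigenvector[OF assms])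

text \<open>The eigenvectors of \<open>W X W\<^sup>\<dagger>\<close> with nonzero eigenvalue are images under \<open>W\<close> of eigenvectors of
  \<open>X\<close>, and \<open>W\<^sup>\<dagger>\<close> maps its kernel into the kernel of \<open>X\<close>.\<close>

lemma mfun_conj_partial_isometry:
  fixes W :: "complex^'n^'m"
  assumes herm: "hermitian X" and f0: "f 0 = 0" and WX: "adj W ** W ** X = X"
  shows "mfun f (W ** X ** adj W) = W ** mfun f X ** adj W"
proof (rule mfun_eqI)
  show "hermitian (W ** X ** adj W)"
    by (rule hermitian_conj[OF herm])
next
  fix u \<mu> assume ev: "(W ** X ** adj W) *v u = complex_of_real \<mu> *s u"
  define v where "v = adj W *v u"
  have WXv: "W *v (X *v v) = complex_of_real \<mu> *s u"
    using ev by (simp add: v_def matrix_vector_mul_assoc matrix_mul_assoc)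
  have Xv: "X *v v = complex_of_real \<mu> *s v"
    using arg_cong[OF WXv, of "\<lambda>x. adj W *v x"]
    by (simp add: v_def matrix_vector_mul_assoc matrix_mul_assoc WX vec.scale)
  have "(W ** mfun f X ** adj W) *v u = W *v (mfun f X *v v)"
    by (simp add: v_def matrix_vector_mul_assoc matrix_mul_assoc)
  also have "\<dots> = complex_of_real (f \<mu>) *s (W *v v)"
    by (simp add: mfun_eigenvector[OF herm Xv] vec.scale)
  also have "\<dots> = complex_of_real (f \<mu>) *s u"
  proof (cases "\<mu> = 0")
    case False
    then have "W *v v = u"
      using WXv by (simp add: Xv vec.scale)
    then show ?thesis by simp
  qed (simp add: f0)
  finally show "(W ** mfun f X ** adj W) *v u = complex_of_real (f \<mu>) *s u" .
qed

lemma psd_unitary_conj_diag_nonneg: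
  assumes P: "psd A" and U: "unitary U" and A: "A = U ** diag_mat d ** adj U"
  shows "d i \<ge> 0"
proof -
  define u where "u = U *v axis i (1::complex)"
  have "cinner u u = cinner (axis i 1) ((adj U ** U) *v axis i (1::complex))"
    unfolding u_def using cinner_adj[of "axis i 1" "adj U" "U *v axis i 1"]
    by (simp add: matrix_vector_mul_assoc)
  also have "\<dots> = 1"
    using U by (simp add: unitary_def cinner_def axis_def if_distrib cong: if_cong)
  finally have "cinner u (A *v u) = complex_of_real (d i)"
    by (simp add: u_def unitary_conj_diag_column[OF U A] cinner_scale_right)
  then show ?thesis using P by (metis Re_complex_of_real psd_def)
qed

lemma msqrt_psd:
  assumes "psd A"
  shows "msqrt A ** msqrt A = A" and "adj (msqrt A) = msqrt A"
proof -
  obtain U d where U: "unitary U" and A: "A = U ** diag_mat d ** adj U"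
    using hermitian_spectral_decomposition assms by (auto simp: psd_def)
  have "d i \<ge> 0" for i by (rule psd_unitary_conj_diag_nonneg[OF assms U A])
  moreover have m: "msqrt A = U ** diag_mat (sqrt \<circ> d) ** adj U"
    unfolding msqrt_def by (rule mfun_unitary_conj_diag[OF U A])
  ultimately have "msqrt A ** msqrt A
      = U ** (diag_mat (sqrt \<circ> d) ** (adj U ** U) ** diag_mat (sqrt \<circ> d)) ** adj U"
    by (simp add: matrix_mul_assoc)
  also have "\<dots> = A"
    using U \<open>\<And>i. d i \<ge> 0\<close> by (simp add: unitary_def diag_mat_mult A matrix_mul_assoc)
  finally show "msqrt A ** msqrt A = A" .
  show "adj (msqrt A) = msqrt A" by (simp add: m adj_mult matrix_mul_assoc)
qed

subsection \<open>Polar decomposition\<close>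

lemma mult_adj_unitary_cancel: "unitary U \<Longrightarrow> X ** adj U ** U = X"
  by (simp add: unitary_def flip: matrix_mul_assoc)

lemma mult_diag_mat_mult: "X ** diag_mat d1 ** diag_mat d2 = X ** diag_mat (\<lambda>i. d1 i * d2 i)"
  by (simp add: diag_mat_mult flip: matrix_mul_assoc)

lemma mult_unitary_conj_support:
  assumes U: "unitary U" and MM: "adj M ** M = U ** diag_mat d ** adj U"
  shows "M ** U ** diag_mat (\<lambda>i. if d i = 0 then 0 else 1) ** adj U = M"
proof -
  define q :: "_ \<Rightarrow> real" where "q = (\<lambda>i. if d i = 0 then 0 else 1)"
  define N where "N = M ** U ** diag_mat (\<lambda>i. 1 - q i)"
  have UMMU: "adj U ** (adj M ** M) ** U = diag_mat d"
    using U by (simp add: MM matrix_mul_assoc unitary_def) (simp flip: matrix_mul_assoc)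
  have "adj N ** N = diag_mat (\<lambda>i. 1 - q i) ** (adj U ** (adj M ** M) ** U) ** diag_mat (\<lambda>i. 1 - q i)"
    by (simp add: N_def adj_mult matrix_mul_assoc)
  also have "\<dots> = diag_mat (\<lambda>i. (1 - q i) * d i * (1 - q i))"
    by (simp add: UMMU diag_mat_mult)
  also have "(\<lambda>i. (1 - q i) * d i * (1 - q i)) = (\<lambda>i. 0)"
    by (auto simp: q_def)
  finally have "adj N ** N = 0" by (simp add: diag_mat_0)
  then have N: "N = 0" by (rule adj_mult_self_eq_0D)
  have "M = M ** U ** (diag_mat q + diag_mat (\<lambda>i. 1 - q i)) ** adj U"
    using U by (simp add: diag_mat_add diag_mat_1 unitary_right flip: matrix_mul_assoc)
  also have "\<dots> = M ** U ** diag_mat q ** adj U + N ** adj U"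
    by (simp add: N_def matrix_add_ldistrib matrix_add_rdistrib matrix_mul_assoc)
  finally show ?thesis by (simp add: N flip: q_def)
qed

text \<open>\<open>W = M U diag(e) U\<^sup>\<dagger>\<close>, where \<open>e\<close> inverts the square roots of the nonzero eigenvalues of
  \<open>M\<^sup>\<dagger> M = U diag(d) U\<^sup>\<dagger>\<close> and vanishes on its kernel.\<close>

lemma polar_decomposition:
  fixes M :: "complex^'n^'m"
  obtains W where "W ** msqrt (adj M ** M) = M"
    and "adj W ** W ** msqrt (adj M ** M) = msqrt (adj M ** M)"
    and "\<And>r. M $ r = 0 \<Longrightarrow> W $ r = 0"
proof -
  have "hermitian (adj M ** M)" using psd_adj_mult_self[of M] by (simp add: psd_def)
  then obtain U d where U: "unitary U" and MM: "adj M ** M = U ** diag_mat d ** adj U"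
    by (rule hermitian_spectral_decomposition)
  have d: "d i \<ge> 0" for i by (rule psd_unitary_conj_diag_nonneg[OF psd_adj_mult_self U MM])
  have sq: "msqrt (adj M ** M) = U ** diag_mat (sqrt \<circ> d) ** adj U"
    unfolding msqrt_def by (rule mfun_unitary_conj_diag[OF U MM])
  define e where "e i = (if d i = 0 then 0 else 1 / sqrt (d i))" for i
  define W where "W = M ** U ** diag_mat e ** adj U"
  have "W ** msqrt (adj M ** M) = M ** U ** diag_mat (\<lambda>i. e i * (sqrt \<circ> d) i) ** adj U"
    by (simp add: W_def sq matrix_mul_assoc mult_adj_unitary_cancel[OF U] mult_diag_mat_mult del: o_apply)
  also have "(\<lambda>i. e i * (sqrt \<circ> d) i) = (\<lambda>i. if d i = 0 then 0 else 1)"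
    using d by (auto simp: e_def)
  finally have polar: "W ** msqrt (adj M ** M) = M"
    by (simp add: mult_unitary_conj_support[OF U MM])
  have "adj W ** W = U ** diag_mat e ** (adj U ** (adj M ** M) ** U) ** diag_mat e ** adj U"
    by (simp add: W_def adj_mult matrix_mul_assoc)
  also have "adj U ** (adj M ** M) ** U = diag_mat d"
    using U by (simp add: MM matrix_mul_assoc unitary_def) (simp flip: matrix_mul_assoc)
  finally have "adj W ** W ** msqrt (adj M ** M)
      = U ** diag_mat (\<lambda>i. e i * d i * e i * (sqrt \<circ> d) i) ** adj U"
    by (simp add: sq matrix_mul_assoc mult_adj_unitary_cancel[OF U] mult_diag_mat_mult del: o_apply)
  also have "(\<lambda>i. e i * d i * e i * (sqrt \<circ> d) i) = sqrt \<circ> d"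
  proof
    fix i show "e i * d i * e i * (sqrt \<circ> d) i = (sqrt \<circ> d) i"
      using d[of i] by (cases "d i = 0") (auto simp: e_def field_simps)
  qed
  finally have "adj W ** W ** msqrt (adj M ** M) = msqrt (adj M ** M)"
    by (simp add: sq o_def)
  moreover have "W $ r = 0" if "M $ r = 0" for r
    using that by (simp add: W_def matrix_matrix_mult_def vec_eq_iff flip: matrix_mul_assoc)
  ultimately show ?thesis using that polar by blast
qed

subsection \<open>Relative entropy under conjugation by a partial isometry\<close>

lemma hermitian_partial_isometry_right:
  assumes "hermitian X" and "adj W ** W ** X = X"
  shows "X ** (adj W ** W) = X"
  using arg_cong[OF assms(2), of adj] assms(1) by (simp add: adj_mult hermitian_def matrix_mul_assoc)

lemma kernel_incl_conj_partial_isometry: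
  assumes WX: "adj W ** W ** X = X" and XW: "X ** (adj W ** W) = X"
    and WY: "adj W ** W ** Y = Y" and YW: "Y ** (adj W ** W) = Y"
  shows "(\<forall>v. (W ** Y ** adj W) *v v = 0 \<longrightarrow> (W ** X ** adj W) *v v = 0)
     \<longleftrightarrow> (\<forall>v. Y *v v = 0 \<longrightarrow> X *v v = 0)"
proof safe
  fix v assume h: "\<forall>v. (W ** Y ** adj W) *v v = 0 \<longrightarrow> (W ** X ** adj W) *v v = 0"
    and Yv: "Y *v v = 0"
  have "(W ** Y ** adj W) *v (W *v v) = W *v ((Y ** (adj W ** W)) *v v)"
    by (simp add: matrix_vector_mul_assoc matrix_mul_assoc)
  then have "(W ** X ** adj W) *v (W *v v) = 0" using h by (simp add: YW Yv)
  moreover have "W ** X ** adj W ** W = W ** X"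
    using XW by (metis matrix_mul_assoc)
  ultimately have "W *v (X *v v) = 0"
    by (simp add: matrix_vector_mul_assoc)
  then have "adj W *v (W *v (X *v v)) = 0" by simp
  then show "X *v v = 0"
    by (simp add: matrix_vector_mul_assoc matrix_mul_assoc WX)
next
  fix u assume h: "\<forall>v. Y *v v = 0 \<longrightarrow> X *v v = 0"
    and "(W ** Y ** adj W) *v u = 0"
  then have "adj W *v ((W ** Y ** adj W) *v u) = 0" by simp
  then have "Y *v (adj W *v u) = 0"
    by (simp add: matrix_vector_mul_assoc matrix_mul_assoc WY)
  then have "X *v (adj W *v u) = 0" using h by blast
  then show "(W ** X ** adj W) *v u = 0"
    by (metis matrix_vector_mul_assoc matrix_vector_mult_0_right)
qed

lemma trace_conj_partial_isometry:
  assumes WX: "adj W ** W ** X = X" and XW: "X ** (adj W ** W) = X"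
  shows "trace (W ** X ** adj W ** (W ** L ** adj W)) = trace (X ** L)"
proof -
  have "W ** X ** adj W ** (W ** L ** adj W) = W ** ((X ** (adj W ** W)) ** L ** adj W)"
    by (simp add: matrix_mul_assoc)
  then have "trace (W ** X ** adj W ** (W ** L ** adj W)) = trace (W ** (X ** L ** adj W))"
    by (simp add: XW)
  also have "\<dots> = trace (X ** L ** adj W ** W)" by (rule trace_mul_sym)
  also have "\<dots> = trace ((X ** L) ** (adj W ** W))" by (simp add: matrix_mul_assoc)
  also have "\<dots> = trace ((adj W ** W) ** (X ** L))" by (rule trace_mul_sym)
  also have "\<dots> = trace (X ** L)" by (simp add: matrix_mul_assoc WX)
  finally show ?thesis .
qed

theorem rel_entropy_conj_partial_isometry:
  fixes W :: "complex^'n^'m"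
  assumes hX: "hermitian X" and hY: "hermitian Y"
    and WX: "adj W ** W ** X = X" and WY: "adj W ** W ** Y = Y"
  shows "rel_entropy (W ** X ** adj W) (W ** Y ** adj W) = rel_entropy X Y"
proof -
  have "mlog2 (W ** X ** adj W) = W ** mlog2 X ** adj W"
    and "mlog2 (W ** Y ** adj W) = W ** mlog2 Y ** adj W"
    unfolding mlog2_def using hX hY WX WY by (auto intro!: mfun_conj_partial_isometry simp: log_def)
  then show ?thesis
    unfolding rel_entropy_def
    by (simp add: kernel_incl_conj_partial_isometry[OF WX hermitian_partial_isometry_right[OF hX WX]
          WY hermitian_partial_isometry_right[OF hY WY]]
        trace_conj_partial_isometry[OF WX hermitian_partial_isometry_right[OF hX WX]])
qed

lemma adj_proj [simp]: "adj (proj j) = proj j"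
  by (simp add: vec_eq_iff proj_def)

lemma adj_kron_proj_mat_1 [simp]: "adj (kron (proj j) (mat 1)) = kron (proj j) (mat 1)"
  by (simp add: adj_kron)

lemma hermitian_Z_map: "hermitian Y \<Longrightarrow> hermitian (Z_map Y)"
  unfolding Z_map_def by (intro hermitian_sum) (metis adj_kron_proj_mat_1 hermitian_conj)

lemma Z_map_conj_kron:
  "Z_map (kron (mat 1) W ** Y ** adj (kron (mat 1) W)) = kron (mat 1) W ** Z_map Y ** adj (kron (mat 1) W)"
proof -
  have "kron (proj j) (mat 1) ** (kron (mat 1) W ** Y ** adj (kron (mat 1) W)) ** kron (proj j) (mat 1)
      = kron (mat 1) W ** (kron (proj j) (mat 1) ** Y ** kron (proj j) (mat 1)) ** adj (kron (mat 1) W)"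
    for j
    by (simp add: adj_kron matrix_mul_assoc kron_mult)
      (simp add: kron_mult flip: matrix_mul_assoc)
  then show ?thesis
    by (simp add: Z_map_def matrix_mult_sum_left matrix_mult_sum_right)
qed

lemma Z_map_fixed_kron:
  assumes "kron (mat 1) Q ** Y = Y"
  shows "kron (mat 1) Q ** Z_map Y = Z_map Y"
proof -
  have "kron (mat 1) Q ** (kron (proj j) (mat 1) ** Y ** kron (proj j) (mat 1))
      = kron (proj j) (mat 1) ** (kron (mat 1) Q ** Y) ** kron (proj j) (mat 1)" for j
    by (simp add: matrix_mul_assoc kron_mult)
  then show ?thesis
    by (simp add: Z_map_def matrix_mult_sum_right assms)
qed

lemma sum_if_const_cond: "(\<Sum>x\<in>A. if P then f x else 0) = (if P then sum f A else 0)"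
  by simp

lemma kron_id_mult_entry:
  "(kron (mat 1) C ** N) $ (r, y) $ j = (\<Sum>y'\<in>UNIV. C $ y $ y' * N $ (r, y') $ j)"
  by (simp add: matrix_matrix_mult_def kron_def mat_def sum_UNIV_prod if_distrib[of "\<lambda>x. x * _"]
      sum_if_const_cond cong: if_cong)


lemma sift_proj_entry:
  "sift_proj Ks $ (((ha,sa),oa),((hb,sb),ob)) $ (((ha',sa'),oa'),((hb',sb'),ob'))
   = (if ha = ha' \<and> sa = sa' \<and> oa = oa' \<and> hb = hb' \<and> sb = sb' \<and> ob = ob' \<and> (sa,sb) \<in> Ks then 1 else 0)"
proof -
  have "sift_proj Ks $ (((ha,sa),oa),((hb,sb),ob)) $ (((ha',sa'),oa'),((hb',sb'),ob'))
     = (\<Sum>p\<in>Ks. if p = (sa,sb) then (if ha = ha' \<and> sa = sa' \<and> oa = oa' \<and> hb = hb' \<and> sb = sb' \<and> ob = ob' then 1 else 0) else 0)"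
    unfolding sift_proj_def sum_component
    by (intro sum.cong refl) (auto simp: kron_def proj_def mat_def split: prod.splits)
  then show ?thesis by auto
qed

lemma adj_sift_proj [simp]: "adj (sift_proj Ks) = sift_proj Ks"
  by (auto simp: vec_eq_iff split_paired_All sift_proj_entry)

lemma ket_left_entry: "ket_left x A $ (x', m) $ j = (if x' = x then A $ m $ j else 0)"
  by (simp add: ket_left_def)

lemma key_block_entry:
  "kron (kron (kron (mat 1) (proj a)) (mat 1)) (kron (kron (mat 1) (proj b)) (proj w))
     $ (((ha,sa),oa),((hb,sb),ob)) $ (((ha',sa'),oa'),((hb',sb'),ob'))
   = (if ha = ha' \<and> sa = a \<and> sa' = a \<and> oa = oa' \<and> hb = hb' \<and> sb = b \<and> sb' = b \<and> ob = w \<and> ob' = w then 1 else 0)"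
  by (simp add: kron_def proj_def mat_def)

lemma key_op_entry:
  "key_op Ks k $ (r, (((ha,sa),oa),((hb,sb),ob))) $ Y
   = (if Y = (((ha,sa),oa),((hb,sb),ob)) \<and> (sa,sb) \<in> Ks \<and> r = k sa sb ob then 1 else 0)"
proof -
  let ?X = "(((ha,sa),oa),((hb,sb),ob))"
  let ?B = "\<lambda>a b w. kron (kron (kron (mat 1) (proj a)) (mat 1)) (kron (kron (mat 1) (proj b)) (proj w))"
  let ?e = "if Y = ?X \<and> r = k sa sb ob then 1 else 0"
  obtain ha' sa' oa' hb' sb' ob' where Y: "Y = (((ha',sa'),oa'),((hb',sb'),ob'))"
    by (metis prod.exhaust)
  have "key_op Ks k $ (r, ?X) $ Y
     = (\<Sum>p\<in>Ks. \<Sum>w\<in>UNIV. ket_left (k (fst p) (snd p) w) (?B (fst p) (snd p) w) $ (r, ?X) $ Y)"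
    unfolding key_op_def case_prod_beta sum_component ..
  also have "\<dots> = (\<Sum>p\<in>Ks. if p = (sa,sb) then (\<Sum>w\<in>UNIV. if w = ob then ?e else 0) else 0)"
  proof (intro sum.cong refl)
    fix p :: "_ \<times> _"
    show "(\<Sum>w\<in>UNIV. ket_left (k (fst p) (snd p) w) (?B (fst p) (snd p) w) $ (r, ?X) $ Y)
        = (if p = (sa,sb) then (\<Sum>w\<in>UNIV. if w = ob then ?e else 0) else 0)"
    proof (cases "p = (sa,sb)")
      case True
      show ?thesis unfolding True fst_conv snd_conv simp_thms if_True
        by (intro sum.cong refl) (auto simp: ket_left_entry key_block_entry Y)
    next
      case False
      obtain a b where p: "p = (a,b)" by (cases p)
      show ?thesis using False by (auto simp: p ket_left_entry key_block_entry Y cong: if_cong)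
    qed
  qed
  finally show ?thesis by simp
qed

lemma ann_kraus_entry:
  "ann_kraus Q s $ ((h, s'), w) $ j = (if s' = s then msqrt (Q s w) $ h $ j else 0)"
  unfolding ann_kraus_def sum_component by (simp add: ket_right_def if_distrib cong: if_cong)

lemma row_delta_mult:
  assumes "\<And>Y. M $ i $ Y = (if Y = y0 then c else 0)"
  shows "(M ** N) $ i $ j = c * N $ y0 $ j"
  by (simp add: matrix_matrix_mult_def assms if_distrib[of "\<lambda>x. x * _"] cong: if_cong)

definition sifted_kraus ::
  "('sa::finite \<Rightarrow> 'oa::finite \<Rightarrow> complex^'ha::finite^'ha) \<Rightarrow> ('sb::finite \<Rightarrow> 'ob::finite \<Rightarrow> complex^'hb::finite^'hb)
   \<Rightarrow> ('sa \<times> 'sb) set \<Rightarrow> ('sa \<Rightarrow> 'sb \<Rightarrow> 'ob \<Rightarrow> 'r::finite) \<Rightarrow> 'sa \<Rightarrow> 'sb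
   \<Rightarrow> complex^('ha \<times> 'hb)^('r \<times> ((('ha \<times> 'sa) \<times> 'oa) \<times> (('hb \<times> 'sb) \<times> 'ob)))" where
  "sifted_kraus QA QB Ks k a b = key_op Ks k ** sift_proj Ks ** kron (ann_kraus QA a) (ann_kraus QB b)"

lemma G_map_kraus:
  "G_map QA QB Ks k \<sigma>
     = (\<Sum>a\<in>UNIV. \<Sum>b\<in>UNIV. sifted_kraus QA QB Ks k a b ** \<sigma> ** adj (sifted_kraus QA QB Ks k a b))"
proof -
  have "G_map QA QB Ks k \<sigma>
      = (key_op Ks k ** sift_proj Ks) ** ann_map QA QB \<sigma> ** (sift_proj Ks ** adj (key_op Ks k))"
    by (simp add: G_map_def matrix_mul_assoc)
  then show ?thesis
    by (simp add: ann_map_def sifted_kraus_def matrix_mult_sum_left matrix_mult_sum_right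
        adj_mult matrix_mul_assoc)
qed

text \<open>\<open>key_record key K\<close> is \<open>V K\<close> for the key map \<open>V = \<Sum>\<^sub>w |key w\<rangle> \<otimes> 1 \<otimes> |w\<rangle>\<langle>w|\<close> reading the
  announcement register of \<open>K\<close>.\<close>

definition key_record ::
  "('w::finite \<Rightarrow> 'r::finite) \<Rightarrow> complex^'n::finite^(('h::finite \<times> 's::finite) \<times> 'w)
   \<Rightarrow> complex^'n^('r \<times> (('h \<times> 's) \<times> 'w))" where
  "key_record key K = (\<chi> p j. if fst p = key (snd (snd p)) then K $ snd p $ j else 0)"

text \<open>\<open>A \<otimes> B\<close> with the output factors reordered from \<open>X \<times> (R \<times> Y)\<close> to \<open>R \<times> (X \<times> Y)\<close>.\<close>

definition kron_middle ::
  "complex^'n1::finite^'m1::finite \<Rightarrow> complex^'n2::finite^('r::finite \<times> 'm2::finite)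
   \<Rightarrow> complex^('n1 \<times> 'n2)^('r \<times> ('m1 \<times> 'm2))" where
  "kron_middle A B = (\<chi> p q. A $ fst (snd p) $ fst q * B $ (fst p, snd (snd p)) $ snd q)"

lemma kron_middle_entry: "kron_middle A B $ (r, (x, y)) $ (j1, j2) = A $ x $ j1 * B $ (r, y) $ j2"
  by (simp add: kron_middle_def)
lemma kron_id_mult_kron_middle:
  "kron (mat 1) (kron (mat 1) W) ** kron_middle A B = kron_middle A (kron (mat 1) W ** B)"
proof -
  have "(kron (mat 1) (kron (mat 1) W) ** kron_middle A B) $ (r, (x, y)) $ (j1, j2)
      = (\<Sum>x'\<in>UNIV. \<Sum>y'\<in>UNIV. if x = x' then W $ y $ y' * (A $ x' $ j1 * B $ (r, y') $ j2) else 0)"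
    for r x y j1 j2
    unfolding kron_id_mult_entry by (simp add: sum_UNIV_prod kron_middle_entry kron_def mat_def
        if_distrib[of "\<lambda>x. x * _"] if_distrib[of "\<lambda>x. _ * x"] cong: if_cong)
  then show ?thesis
    by (simp add: vec_eq_iff split_paired_All sum_if_const_cond kron_id_mult_entry kron_middle_entry
        sum_distrib_left algebra_simps)
qed
lemma sifted_kraus_eq_kron_middle:
  "sifted_kraus QA QB Ks k a b
     = (if (a, b) \<in> Ks then kron_middle (ann_kraus QA a) (key_record (k a b) (ann_kraus QB b)) else 0)"
proof -
  have "sifted_kraus QA QB Ks k a b $ (r, (((ha, sa), oa), ((hb, sb), ob))) $ (ja, jb)
      = (if (a, b) \<in> Ks then kron_middle (ann_kraus QA a) (key_record (k a b) (ann_kraus QB b)) else 0)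
          $ (r, (((ha, sa), oa), ((hb, sb), ob))) $ (ja, jb)" for r ha sa oa hb sb ob ja jb
  proof -
    let ?X = "(((ha, sa), oa), ((hb, sb), ob))"
    have "sifted_kraus QA QB Ks k a b $ (r, ?X) $ (ja, jb)
        = (if (sa, sb) \<in> Ks \<and> r = k sa sb ob then 1 else 0) *
          (sift_proj Ks ** kron (ann_kraus QA a) (ann_kraus QB b)) $ ?X $ (ja, jb)"
      unfolding sifted_kraus_def matrix_mul_assoc[symmetric]
      by (rule row_delta_mult) (auto simp: key_op_entry)
    also have "(sift_proj Ks ** kron (ann_kraus QA a) (ann_kraus QB b)) $ ?X $ (ja, jb)
        = (if (sa, sb) \<in> Ks then 1 else 0) * kron (ann_kraus QA a) (ann_kraus QB b) $ ?X $ (ja, jb)"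
      by (rule row_delta_mult) (auto simp: split_paired_all sift_proj_entry)
    finally show ?thesis
      by (auto simp: kron_def ann_kraus_entry kron_middle_def key_record_def)
  qed
  then show ?thesis by (simp add: vec_eq_iff split_paired_All)
qed

subsection \<open>Coarse-graining Bob's announcement\<close>

definition fiber_stack ::
  "('w::finite \<Rightarrow> complex^'h::finite^'h) \<Rightarrow> ('w \<Rightarrow> 'c) \<Rightarrow> 'c \<Rightarrow> complex^'h^('h \<times> 'w)" where
  "fiber_stack Q c \<kappa> = (\<chi> p j. if c (snd p) = \<kappa> then msqrt (Q (snd p)) $ fst p $ j else 0)"

lemma adj_fiber_stack_mult:
  assumes "\<And>w. psd (Q w)"
  shows "adj (fiber_stack Q c \<kappa>) ** fiber_stack Q c \<kappa> = (\<Sum>w | c w = \<kappa>. Q w)"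
proof -
  have "(adj (fiber_stack Q c \<kappa>) ** fiber_stack Q c \<kappa>) $ i $ j
      = (\<Sum>w\<in>UNIV. \<Sum>k\<in>UNIV. if c w = \<kappa> then cnj (msqrt (Q w) $ k $ i) * msqrt (Q w) $ k $ j else 0)"
    for i j
    by (simp add: matrix_matrix_mult_def sum_UNIV_prod fiber_stack_def if_distrib[of cnj]
        if_distrib[of "\<lambda>x. x * _"] cong: if_cong) (rule sum.swap)
  moreover have "(\<Sum>k\<in>UNIV. cnj (msqrt (Q w) $ k $ i) * msqrt (Q w) $ k $ j) = Q w $ i $ j" for w i j
  proof -
    have "Q w $ i $ j = (adj (msqrt (Q w)) ** msqrt (Q w)) $ i $ j"
      by (simp add: msqrt_psd[OF assms])
    then show ?thesis by (simp add: matrix_matrix_mult_def)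
  qed
  ultimately show ?thesis
    by (simp add: vec_eq_iff sum_if_const_cond sum_component sum.If_cases)
qed

definition block_glue ::
  "('s::finite \<Rightarrow> 'c::finite \<Rightarrow> complex^'h::finite^('h \<times> 'w::finite))
   \<Rightarrow> complex^(('h \<times> 's) \<times> 'c)^(('h \<times> 's) \<times> 'w)" where
  "block_glue W = (\<chi> p q. if snd (fst p) = snd (fst q)
                          then W (snd (fst p)) (snd q) $ (fst (fst p), snd p) $ fst (fst q) else 0)"

lemma block_glue_entry:
  "block_glue W $ ((i, s), w) $ ((i', s'), \<kappa>) = (if s = s' then W s \<kappa> $ (i, w) $ i' else 0)"
  by (simp add: block_glue_def)

lemma key_record_entry:
  "key_record key K $ (r, x) $ j = (if r = key (snd x) then K $ x $ j else 0)"
  by (simp add: key_record_def)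

lemma sum_if_delta_cond:
  "(\<Sum>\<kappa>\<in>UNIV. if P \<kappa> then if x = \<kappa> then f \<kappa> else 0 else 0) = (if P x then f x else 0)"
  for x :: "'a::finite"
proof -
  have "(\<Sum>\<kappa>\<in>UNIV. if P \<kappa> then if x = \<kappa> then f \<kappa> else 0 else 0)
      = (\<Sum>\<kappa>\<in>UNIV. if x = \<kappa> then if P x then f x else 0 else 0)"
    by (intro sum.cong) auto
  then show ?thesis by simp
qed

lemma kron_id_block_glue_mult_key_record:
  "(kron (mat 1) (block_glue W) ** key_record key (ann_kraus F s)) $ (r, ((i, s'), w)) $ j
   = (if s' = s then \<Sum>\<kappa>\<in>UNIV. if r = key \<kappa> then (W s \<kappa> ** msqrt (F s \<kappa>)) $ (i, w) $ j else 0 else 0)"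
proof -
  let ?t = "\<lambda>i' \<kappa>. W s \<kappa> $ (i, w) $ i' * msqrt (F s \<kappa>) $ i' $ j"
  have "(kron (mat 1) (block_glue W) ** key_record key (ann_kraus F s)) $ (r, ((i, s'), w)) $ j
      = (\<Sum>i'\<in>UNIV. \<Sum>s''\<in>UNIV. \<Sum>\<kappa>\<in>UNIV.
           if s'' = s then if s' = s then if r = key \<kappa> then ?t i' \<kappa> else 0 else 0 else 0)"
    unfolding kron_id_mult_entry sum_UNIV_prod
    by (intro sum.cong refl) (auto simp: block_glue_entry key_record_entry ann_kraus_entry)
  also have "\<dots> = (if s' = s then \<Sum>i'\<in>UNIV. \<Sum>\<kappa>\<in>UNIV. if r = key \<kappa> then ?t i' \<kappa> else 0 else 0)"
    by (simp add: sum_if_const_cond)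
  also have "\<dots> = (if s' = s then \<Sum>\<kappa>\<in>UNIV. if r = key \<kappa> then (W s \<kappa> ** msqrt (F s \<kappa>)) $ (i, w) $ j
      else 0 else 0)"
    by (subst sum.swap) (simp add: sum_if_const_cond matrix_matrix_mult_def cong: if_cong)
  finally show ?thesis .
qed

lemma adj_block_glue_mult_entry:
  "(adj (block_glue W) ** block_glue W) $ ((i, s), \<kappa>) $ ((i', s'), \<kappa>')
   = (if s = s' then (adj (W s \<kappa>) ** W s \<kappa>') $ i $ i' else 0)"
  by (simp add: matrix_matrix_mult_def sum_UNIV_prod block_glue_entry if_distrib[of "\<lambda>x. x * _"]
      if_distrib[of "\<lambda>x. _ * x"] sum_if_const_cond cong: if_cong)

lemma kron_id_adj_block_glue_mult_key_record:
  assumes cross: "\<And>\<kappa> \<kappa>'. \<kappa> \<noteq> \<kappa>' \<Longrightarrow> adj (V s \<kappa>) ** V s \<kappa>' = 0"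
  shows "(kron (mat 1) (adj (block_glue V) ** block_glue V) ** key_record key (ann_kraus F s))
           $ (r, ((i, s'), \<kappa>)) $ j
       = (if s' = s \<and> r = key \<kappa> then (adj (V s \<kappa>) ** V s \<kappa> ** msqrt (F s \<kappa>)) $ i $ j else 0)"
proof -
  let ?t = "\<lambda>i' \<kappa>'. (adj (V s \<kappa>) ** V s \<kappa>') $ i $ i' * msqrt (F s \<kappa>') $ i' $ j"
  have "(kron (mat 1) (adj (block_glue V) ** block_glue V) ** key_record key (ann_kraus F s))
           $ (r, ((i, s'), \<kappa>)) $ j
      = (\<Sum>i'\<in>UNIV. \<Sum>s''\<in>UNIV. \<Sum>\<kappa>'\<in>UNIV.
           if s'' = s then if s' = s then if r = key \<kappa>' then ?t i' \<kappa>' else 0 else 0 else 0)"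
    unfolding kron_id_mult_entry sum_UNIV_prod
    by (intro sum.cong refl) (auto simp: adj_block_glue_mult_entry key_record_entry ann_kraus_entry)
  also have "\<dots> = (if s' = s then \<Sum>i'\<in>UNIV. \<Sum>\<kappa>'\<in>UNIV. if r = key \<kappa>' then ?t i' \<kappa>' else 0 else 0)"
    by (simp add: sum_if_const_cond)
  also have "\<dots> = (if s' = s then \<Sum>i'\<in>UNIV. \<Sum>\<kappa>'\<in>UNIV. if r = key \<kappa>' then if \<kappa> = \<kappa>' then ?t i' \<kappa>' else 0 else 0
      else 0)"
    using cross[of \<kappa>] by (auto intro!: sum.cong)
  also have "\<dots> = (if s' = s \<and> r = key \<kappa> then (adj (V s \<kappa>) ** V s \<kappa> ** msqrt (F s \<kappa>)) $ i $ j else 0)"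
    by (simp add: sum_if_delta_cond sum_if_const_cond
        matrix_matrix_mult_def[of "adj (V s \<kappa>) ** V s \<kappa>"])
  finally show ?thesis .
qed

lemma coarse_graining_partial_isometry:
  fixes Q :: "'s::finite \<Rightarrow> 'w::finite \<Rightarrow> complex^'h::finite^'h" and c :: "'s \<Rightarrow> 'w \<Rightarrow> 'c::finite"
  assumes psd: "\<And>s w. psd (Q s w)"
  defines "F \<equiv> \<lambda>s \<kappa>. \<Sum>w | c s w = \<kappa>. Q s w"
  obtains W :: "complex^(('h \<times> 's) \<times> 'c)^(('h \<times> 's) \<times> 'w)" where
    "\<And>s (key :: 'c \<Rightarrow> 'r::finite).
       key_record (\<lambda>w. key (c s w)) (ann_kraus Q s) = kron (mat 1) W ** key_record key (ann_kraus F s)"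
    "\<And>s (key :: 'c \<Rightarrow> 'r).
       kron (mat 1) (adj W ** W) ** key_record key (ann_kraus F s) = key_record key (ann_kraus F s)"
proof -
  have "\<exists>V. V ** msqrt (F s \<kappa>) = fiber_stack (Q s) (c s) \<kappa>
          \<and> adj V ** V ** msqrt (F s \<kappa>) = msqrt (F s \<kappa>)
          \<and> (\<forall>r. fiber_stack (Q s) (c s) \<kappa> $ r = 0 \<longrightarrow> V $ r = 0)" for s \<kappa>
    using polar_decomposition[of "fiber_stack (Q s) (c s) \<kappa>"]
    unfolding adj_fiber_stack_mult[OF psd] F_def by metis
  then obtain V where V: "\<And>s \<kappa>. V s \<kappa> ** msqrt (F s \<kappa>) = fiber_stack (Q s) (c s) \<kappa>"
      "\<And>s \<kappa>. adj (V s \<kappa>) ** V s \<kappa> ** msqrt (F s \<kappa>) = msqrt (F s \<kappa>)"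
      "\<And>s \<kappa> r. fiber_stack (Q s) (c s) \<kappa> $ r = 0 \<Longrightarrow> V s \<kappa> $ r = 0"
    by metis
  have V_row: "V s \<kappa> $ (i, w) = 0" if "c s w \<noteq> \<kappa>" for s \<kappa> i w
    using that by (intro V(3)) (simp add: vec_eq_iff fiber_stack_def)
  have cross: "adj (V s \<kappa>) ** V s \<kappa>' = 0" if "\<kappa> \<noteq> \<kappa>'" for s \<kappa> \<kappa>'
  proof -
    have "cnj (V s \<kappa> $ (i', w) $ i) * V s \<kappa>' $ (i', w) $ j = 0" for i i' j w
      using that V_row[of s w \<kappa> i'] V_row[of s w \<kappa>' i'] by (cases "c s w = \<kappa>") auto
    then show ?thesis by (auto simp: vec_eq_iff matrix_matrix_mult_def sum_UNIV_prod intro!: sum.neutral)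
  qed
  show thesis
  proof (rule that)
    fix s and key :: "'c \<Rightarrow> 'r"
    show "key_record (\<lambda>w. key (c s w)) (ann_kraus Q s) = kron (mat 1) (block_glue V) ** key_record key (ann_kraus F s)"
      by (simp add: vec_eq_iff split_paired_All kron_id_block_glue_mult_key_record V(1) fiber_stack_def
          key_record_entry ann_kraus_entry if_distrib[of "\<lambda>x. x $ _"] sum_if_delta_cond cong: if_cong)
    show "kron (mat 1) (adj (block_glue V) ** block_glue V) ** key_record key (ann_kraus F s)
        = key_record key (ann_kraus F s)"
      by (simp add: vec_eq_iff split_paired_All kron_id_adj_block_glue_mult_key_record[OF cross] V(2)
          key_record_entry ann_kraus_entry)
  qed
qed

lemma adj_kron_id_mult_self: "adj (kron (mat 1) W) ** kron (mat 1) W = kron (mat 1) (adj W ** W)"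
  by (simp add: adj_kron kron_mult)

lemma hermitian_G_map: "hermitian \<sigma> \<Longrightarrow> hermitian (G_map QA QB Ks k \<sigma>)"
  unfolding G_map_kraus by (intro hermitian_sum hermitian_conj)

lemma sum_fiber_reindex:
  assumes "inj f"
  shows "(\<Sum>y\<in>{y\<in>range f. c y = \<kappa>}. P y) = (\<Sum>w | c (f w) = \<kappa>. P (f w))"
proof -
  have "{y\<in>range f. c y = \<kappa>} = f ` {w. c (f w) = \<kappa>}" by auto
  then show ?thesis using assms by (simp add: sum.reindex inj_on_def inj_def)
qed

lemma G_map_coarse_graining:
  fixes QA :: "'sa::finite \<Rightarrow> 'oa::finite \<Rightarrow> complex^'ha::finite^'ha"
    and PB :: "'y::finite \<Rightarrow> complex^'hb::finite^'hb"
    and fb :: "'sb::finite \<Rightarrow> 'ob::finite \<Rightarrow> 'y"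
    and g :: "'sa \<Rightarrow> 'sb \<Rightarrow> 'y \<Rightarrow> 'r::finite" and c :: "'y \<Rightarrow> 'c::finite"
    and h :: "'sa \<Rightarrow> 'sb \<Rightarrow> 'c \<Rightarrow> 'r"
  assumes povm: "povm PB" and fb_inj: "\<forall>b. inj (fb b)"
    and g_factor: "\<forall>(a,b)\<in>Ks. \<forall>y\<in>range (fb b). g a b y = h a b (c y)"
  defines "F \<equiv> (\<lambda>b \<kappa>. \<Sum>y\<in>{y\<in>range (fb b). c y = \<kappa>}. PB y)"
  obtains W where
    "G_map QA (\<lambda>b \<beta>. PB (fb b \<beta>)) Ks (\<lambda>a b \<beta>. g a b (fb b \<beta>)) \<sigma>
       = kron (mat 1) W ** G_map QA F Ks h \<sigma> ** adj (kron (mat 1) W)"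
    "kron (mat 1) (adj W ** W) ** G_map QA F Ks h \<sigma> = G_map QA F Ks h \<sigma>"
proof -
  have psd: "\<And>b \<beta>. psd (PB (fb b \<beta>))" using povm by (simp add: povm_def)
  have F: "F = (\<lambda>b \<kappa>. \<Sum>w | c (fb b w) = \<kappa>. PB (fb b w))"
    using fb_inj by (simp add: F_def sum_fiber_reindex)
  obtain Wb where Wb: "\<And>b (key :: 'c \<Rightarrow> 'r). key_record (\<lambda>w. key (c (fb b w))) (ann_kraus (\<lambda>b \<beta>. PB (fb b \<beta>)) b)
        = kron (mat 1) Wb ** key_record key (ann_kraus F b)"
      "\<And>b (key :: 'c \<Rightarrow> 'r). kron (mat 1) (adj Wb ** Wb) ** key_record key (ann_kraus F b)
        = key_record key (ann_kraus F b)"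
    using coarse_graining_partial_isometry[of "\<lambda>b \<beta>. PB (fb b \<beta>)" "\<lambda>b w. c (fb b w)",
          OF psd, folded F] by blast
  let ?K = "sifted_kraus QA F Ks h"
  have fine: "sifted_kraus QA (\<lambda>b \<beta>. PB (fb b \<beta>)) Ks (\<lambda>a b \<beta>. g a b (fb b \<beta>)) a b
      = kron (mat 1) (kron (mat 1) Wb) ** ?K a b" for a b
  proof (cases "(a, b) \<in> Ks")
    case True
    then have "(\<lambda>\<beta>. g a b (fb b \<beta>)) = (\<lambda>\<beta>. h a b (c (fb b \<beta>)))" using g_factor by auto
    then show ?thesis using True by (simp add: sifted_kraus_eq_kron_middle kron_id_mult_kron_middle Wb(1))
  qed (simp add: sifted_kraus_eq_kron_middle)
  have fixed: "kron (mat 1) (kron (mat 1) (adj Wb ** Wb)) ** ?K a b = ?K a b" for a b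
    by (simp add: sifted_kraus_eq_kron_middle kron_id_mult_kron_middle Wb(2))
  show thesis
  proof (rule that)
    show "G_map QA (\<lambda>b \<beta>. PB (fb b \<beta>)) Ks (\<lambda>a b \<beta>. g a b (fb b \<beta>)) \<sigma>
        = kron (mat 1) (kron (mat 1) Wb) ** G_map QA F Ks h \<sigma> ** adj (kron (mat 1) (kron (mat 1) Wb))"
      by (simp add: G_map_kraus fine adj_mult matrix_mult_sum_left matrix_mult_sum_right matrix_mul_assoc)
    show "kron (mat 1) (adj (kron (mat 1) Wb) ** kron (mat 1) Wb) ** G_map QA F Ks h \<sigma> = G_map QA F Ks h \<sigma>"
      using fixed by (simp add: adj_kron_id_mult_self G_map_kraus matrix_mult_sum_right matrix_mul_assoc)
  qed
qed

theorem mainTheorem3: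
  fixes PA :: "'x::finite \<Rightarrow> complex^'ha::finite^'ha"
    and PB :: "'y::finite \<Rightarrow> complex^'hb::finite^'hb"
    and fa :: "'sa::finite \<Rightarrow> 'oa::finite \<Rightarrow> 'x"
    and fb :: "'sb::finite \<Rightarrow> 'ob::finite \<Rightarrow> 'y"
    and Ks :: "('sa \<times> 'sb) set"
    and g :: "'sa \<Rightarrow> 'sb \<Rightarrow> 'y \<Rightarrow> 'r::finite"
    and c :: "'y \<Rightarrow> 'c::finite"
    and h :: "'sa \<Rightarrow> 'sb \<Rightarrow> 'c \<Rightarrow> 'r"
    and \<rho> :: "complex^('ha \<times> 'hb)^('ha \<times> 'hb)"
  assumes povmA: "povm PA"
    and povmB: "povm PB"
    and fa_inj: "\<forall>a. inj (fa a)"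
    and fa_disj: "\<forall>a a'. a \<noteq> a' \<longrightarrow> range (fa a) \<inter> range (fa a') = {}"
    and fa_cover: "(\<Union>a. range (fa a)) = UNIV"
    and fb_inj: "\<forall>b. inj (fb b)"
    and fb_disj: "\<forall>b b'. b \<noteq> b' \<longrightarrow> range (fb b) \<inter> range (fb b') = {}"
    and fb_cover: "(\<Union>b. range (fb b)) = UNIV"
    and g_factor: "\<forall>(a,b)\<in>Ks. \<forall>y\<in>range (fb b). g a b y = h a b (c y)"
    and rho: "density_op \<rho>"
  defines "F \<equiv> (\<lambda>b \<kappa>. \<Sum>y\<in>{y\<in>range (fb b). c y = \<kappa>}. PB y)"
  shows "rel_entropy (G_map (\<lambda>a \<alpha>. PA (fa a \<alpha>)) (\<lambda>b \<beta>. PB (fb b \<beta>)) Ks (\<lambda>a b \<beta>. g a b (fb b \<beta>)) \<rho>)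
                     (Z_map (G_map (\<lambda>a \<alpha>. PA (fa a \<alpha>)) (\<lambda>b \<beta>. PB (fb b \<beta>)) Ks (\<lambda>a b \<beta>. g a b (fb b \<beta>)) \<rho>))
       = rel_entropy (G_map (\<lambda>a \<alpha>. PA (fa a \<alpha>)) F Ks h \<rho>)
                     (Z_map (G_map (\<lambda>a \<alpha>. PA (fa a \<alpha>)) F Ks h \<rho>))"
proof -
  let ?X = "G_map (\<lambda>a \<alpha>. PA (fa a \<alpha>)) F Ks h \<rho>"
  obtain W where conj: "G_map (\<lambda>a \<alpha>. PA (fa a \<alpha>)) (\<lambda>b \<beta>. PB (fb b \<beta>)) Ks (\<lambda>a b \<beta>. g a b (fb b \<beta>)) \<rho>
        = kron (mat 1) W ** ?X ** adj (kron (mat 1) W)"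
      and fixed: "kron (mat 1) (adj W ** W) ** ?X = ?X"
    using G_map_coarse_graining[of PB fb Ks g h c "\<lambda>a \<alpha>. PA (fa a \<alpha>)" \<rho>, OF povmB fb_inj g_factor,
        folded F_def] by blast
  have hX: "hermitian ?X"
    using rho by (intro hermitian_G_map) (simp add: density_op_def psd_def)
  show ?thesis
    unfolding conj Z_map_conj_kron
    by (rule rel_entropy_conj_partial_isometry[OF hX hermitian_Z_map[OF hX]])
      (simp_all add: adj_kron_id_mult_self fixed Z_map_fixed_kron)
qed

end
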